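(* Assume the standing setup. If $\lambda_1(\boldsymbol\Omega_K)>1$, then $\mathbf 0_K\prec\mathbf g(1)\prec\mathbf 1_K$.
   Context: Standing setup: $K\ge1$, $\boldsymbol\rho=(\rho_k)$ with $\rho_k\in(0,1)$, $\sum\rho_k=1$; $\mathbf S_K=(s_{kl})$ symmetric with $s_{kl}>0$; $\mathbf D_{\mathbf v}$ diagonal with diagonal $\mathbf v$; $\boldsymbol\Omega_K=\mathbf D_{\boldsymbol\rho^{\odot1/2}}\mathbf S_K\mathbf D_{\boldsymbol\rho^{\odot1/2}}$, $\boldsymbol\Gamma_K=\mathbf S_K\mathbf D_{\boldsymbol\rho}$; $\lambda_1$ = largest eigenvalue. For each $N$, $[N]$ is split into consecutive blocks $B_k$ with $|B_k|/N\to\rho_k$; $\Sigma_{ij}=s_{kl}$ for $i\in B_k,j\in B_l$; $\mathbf H$ symmetric with independent standard Gaussian entries on/above the diagonal; $\mathbf X=\mathbf H\odot\boldsymbol\Sigma^{\odot1/2}-N^{-1/2}\mathrm{Diag}(\boldsymbol\Sigma\mathbf 1)$; $\mu_X$ the a.s. limiting spectral distribution of $\mathbf X/\sqrt N$. QVE: for $z\in\mathbb H_-=\{\Im z<0\}$, $\mathbf g(z)$ is the unique solution in $(\mathbb H_+)^K$ of $\mathbf 1_K=z\mathbf g-\mathbf g\odot\boldsymbol\Gamma_K(\mathbf g-\mathbf 1_K)$, $\sum_k\rho_kg_k$ being the Stieltjes transform of $\mu_X$; $\mathbf g$ extends continuously to $\mathbb H_-\cup\mathbb R$, analytically off $\mathrm{Supp}(\mu_X)$,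 and $\mathbf g(1)$ is the value of this extension at $1$. $\prec$ is entrywise strict inequality. *)

theory Defs
  imports "HOL-Analysis.Analysis"
begin

text \<open>Omega_K = D_{rho^{1/2}} S_K D_{rho^{1/2}}, entrywise sqrt(rho_k) s_kl sqrt(rho_l).\<close>
definition Omega_mat :: "real^'k::finite \<Rightarrow> real^'k^'k \<Rightarrow> real^'k^'k" where
  "Omega_mat rho S = (\<chi> k l. sqrt (rho $ k) * S $ k $ l * sqrt (rho $ l))"

text \<open>Gamma_K = S_K D_rho, entrywise s_kl rho_l.\<close>
definition Gamma_mat :: "real^'k::finite \<Rightarrow> real^'k^'k \<Rightarrow> real^'k^'k" where
  "Gamma_mat rho S = (\<chi> k l. S $ k $ l * rho $ l)"

definition lambda_max :: "real^'k::finite^'k \<Rightarrow> real" where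
  "lambda_max A = Max {l. \<exists>v. v \<noteq> 0 \<and> A *v v = l *\<^sub>R v}"

definition QVE :: "real^'k::finite \<Rightarrow> real^'k^'k \<Rightarrow> complex \<Rightarrow> complex^'k \<Rightarrow> bool" where
  "QVE rho S z g \<longleftrightarrow>
     (\<forall>k. 1 = z * g $ k - g $ k * (\<Sum>l\<in>UNIV. complex_of_real (Gamma_mat rho S $ k $ l) * (g $ l - 1)))"

end

theory Submission
  imports Defs
begin

text \<open>Letting z \<rightarrow> 1 in the QVE gives a solution g(1) whose imaginary parts are nonnegative; pairing
  the imaginary and the real part of the equation through the symmetric weights rho_k s_kl rho_l shows
  that they vanish. For Im z < 0 the vector Im g(z) is a positive supersolution, and a Schur test turns
  it into the stability bound <w, D_rho S D_rho w> \<le> \<Sum>_k rho_k w_k^2 / |g_k(z)|^2, which survives the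
  limit. With r = g(1) real, q = 1 - r solves Gamma q = q / r. Testing stability with the negative part
  of q gives q \<ge> 0; q = 0 is impossible, because then the eigenvector of Omega for lambda_1 > 1
  violates stability; and positivity of S spreads one positive q_j to all components, so 0 < r < 1.\<close>

lemma inner_matrix_vector_mult_symmetric:
  fixes A :: "real^'n::finite^'n"
  assumes "transpose A = A"
  shows "inner (A *v x) y = inner x (A *v y)"
  by (metis assms dot_lmul_matrix vector_transpose_matrix)

definition prob_simplex :: "(real^'n::finite) set" where
  "prob_simplex = {x. (\<forall>k. 0 \<le> x$k) \<and> (\<Sum>k\<in>UNIV. x$k) = 1}"

lemma compact_prob_simplex: "compact prob_simplex"
proof -
  have "prob_simplex = (\<Inter>k. {x. 0 \<le> x$k}) \<inter> {x. (\<Sum>k\<in>UNIV. x$k) = (1::real)}"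
    unfolding prob_simplex_def by auto
  also have "closed \<dots>"
    by (intro closed_Int closed_INT ballI closed_Collect_le closed_Collect_eq continuous_intros)
  finally have "closed (prob_simplex :: (real^'n) set)" .
  moreover have "bounded (prob_simplex :: (real^'n) set)"
    unfolding bounded_iff
  proof (intro exI ballI)
    fix x :: "real^'n" assume "x \<in> prob_simplex"
    then show "norm x \<le> 1"
      using norm_le_l1_cart[of x] by (simp add: prob_simplex_def)
  qed
  ultimately show ?thesis by (simp add: compact_eq_bounded_closed)
qed

lemma convex_prob_simplex: "convex prob_simplex"
  unfolding convex_def prob_simplex_def
  by (auto simp: sum.distrib sum_distrib_left[symmetric])

lemma prob_simplex_nonempty: "prob_simplex \<noteq> {}"
proof -
  have "(\<chi> k. 1 / real CARD('n)) \<in> (prob_simplex :: (real^'n::finite) set)"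
    by (simp add: prob_simplex_def)
  then show ?thesis by blast
qed

lemma prob_simplex_pos_component:
  assumes "x \<in> prob_simplex"
  shows "\<exists>j. 0 < x$j"
proof (rule ccontr)
  assume "\<nexists>j. 0 < x$j"
  then have "\<forall>j. x$j = 0"
    using assms unfolding prob_simplex_def by (metis (mono_tags) mem_Collect_eq not_less order.antisym)
  then show False using assms by (simp add: prob_simplex_def)
qed

lemma positive_matrix_has_eigenvector:
  fixes A :: "real^'n::finite^'n"
  assumes pos: "\<And>i j. 0 < A$i$j"
  shows "\<exists>l v. v \<noteq> 0 \<and> A *v v = l *\<^sub>R v"
proof -
  have Ax_pos: "0 < (A *v x) $ i" if x: "x \<in> prob_simplex" for x i
  proof -
    obtain j where "0 < x$j" using prob_simplex_pos_component[OF x] by blast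
    then have "0 < A$i$j * x$j" using pos by simp
    also have "\<dots> \<le> (\<Sum>j\<in>UNIV. A$i$j * x$j)"
      by (rule member_le_sum) (use x pos in \<open>auto simp: prob_simplex_def less_imp_le\<close>)
    finally show ?thesis by (simp add: matrix_vector_mult_def)
  qed
  define D where "D x = (\<Sum>i\<in>UNIV. (A *v x) $ i)" for x
  have D_pos: "0 < D x" if "x \<in> prob_simplex" for x
    unfolding D_def by (rule sum_pos) (use Ax_pos that in auto)
  define f where "f x = inverse (D x) *\<^sub>R (A *v x)" for x
  have "continuous_on prob_simplex f"
    unfolding f_def D_def matrix_vector_mult_def
    by (intro continuous_intros) (use D_pos in \<open>force simp: D_def matrix_vector_mult_def\<close>)
  moreover have "f \<in> prob_simplex \<rightarrow> prob_simplex"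
  proof
    fix x :: "real^'n" assume x: "x \<in> prob_simplex"
    show "f x \<in> prob_simplex"
      using Ax_pos[OF x] D_pos[OF x]
      by (simp add: prob_simplex_def f_def D_def sum_distrib_left[symmetric] less_imp_le)
  qed
  ultimately obtain x where x: "x \<in> prob_simplex" "f x = x"
    using brouwer[OF compact_prob_simplex convex_prob_simplex prob_simplex_nonempty] by blast
  have "A *v x = D x *\<^sub>R f x" using D_pos[OF x(1)] by (simp add: f_def)
  then have "A *v x = D x *\<^sub>R x" using x(2) by simp
  moreover have "x \<noteq> 0" using prob_simplex_pos_component[OF x(1)] by auto
  ultimately show ?thesis by blast
qed

lemma finite_eigenvalues_symmetric:
  fixes A :: "real^'n::finite^'n"
  assumes sym: "transpose A = A"
  shows "finite {l. \<exists>v. v \<noteq> 0 \<and> A *v v = l *\<^sub>R v}"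
proof -
  define L where "L = {l. \<exists>v. v \<noteq> 0 \<and> A *v v = l *\<^sub>R v}"
  define V where "V l = (SOME v. v \<noteq> 0 \<and> A *v v = l *\<^sub>R v)" for l
  have V: "V l \<noteq> 0 \<and> A *v V l = l *\<^sub>R V l" if "l \<in> L" for l
    using that unfolding L_def V_def by (rule CollectE) (rule someI_ex)
  have inj: "inj_on V L"
  proof (rule inj_onI)
    fix l1 l2 assume l: "l1 \<in> L" "l2 \<in> L" "V l1 = V l2"
    then have "l1 *\<^sub>R V l1 = l2 *\<^sub>R V l1" using V by metis
    then have "(l1 - l2) *\<^sub>R V l1 = 0" by (simp add: algebra_simps)
    then show "l1 = l2" using V l(1) by auto
  qed
  have "pairwise orthogonal (V ` L)"
  proof (auto simp: pairwise_def)
    fix l1 l2 assume l: "l1 \<in> L" "l2 \<in> L" "V l1 \<noteq> V l2"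
    have "l1 * inner (V l1) (V l2) = inner (A *v V l1) (V l2)" using V[OF l(1)] by simp
    also have "\<dots> = inner (V l1) (A *v V l2)" by (rule inner_matrix_vector_mult_symmetric[OF sym])
    also have "\<dots> = l2 * inner (V l1) (V l2)" using V[OF l(2)] by simp
    finally have "(l1 - l2) * inner (V l1) (V l2) = 0" by (simp add: algebra_simps)
    moreover have "l1 \<noteq> l2" using l(3) by auto
    ultimately show "orthogonal (V l1) (V l2)" by (simp add: orthogonal_def)
  qed
  moreover have "0 \<notin> V ` L" using V by auto
  ultimately have "finite (V ` L)"
    using pairwise_orthogonal_independent independent_imp_finite by blast
  then show ?thesis using inj finite_imageD unfolding L_def by blast
qed

lemma lambda_max_eigenvector:
  fixes A :: "real^'n::finite^'n"
  assumes "transpose A = A" and "\<And>i j. 0 < A$i$j"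
  shows "\<exists>v. v \<noteq> 0 \<and> A *v v = lambda_max A *\<^sub>R v"
proof -
  have "lambda_max A \<in> {l. \<exists>v. v \<noteq> 0 \<and> A *v v = l *\<^sub>R v}"
    unfolding lambda_max_def
    by (rule Max_in[OF finite_eigenvalues_symmetric[OF assms(1)]])
      (use positive_matrix_has_eigenvector[OF assms(2)] in auto)
  then show ?thesis by blast
qed

definition Gamma_apply :: "real^'k::finite \<Rightarrow> real^'k^'k \<Rightarrow> ('k \<Rightarrow> real) \<Rightarrow> 'k \<Rightarrow> real" where
  "Gamma_apply rho S w k = (\<Sum>l\<in>UNIV. Gamma_mat rho S $ k $ l * w l)"

definition Gamma_form :: "real^'k::finite \<Rightarrow> real^'k^'k \<Rightarrow> ('k \<Rightarrow> real) \<Rightarrow> real" where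
  "Gamma_form rho S w = (\<Sum>k\<in>UNIV. rho$k * w k * Gamma_apply rho S w k)"

lemma Gamma_apply_eq: "Gamma_apply rho S w k = (\<Sum>l\<in>UNIV. S$k$l * rho$l * w l)"
  by (simp add: Gamma_apply_def Gamma_mat_def)

lemma QVE_components:
  assumes "QVE rho S z h"
  shows QVE_nonzero: "h$k \<noteq> 0"
    and QVE_Im: "Gamma_apply rho S (\<lambda>l. Im (h$l)) k = Im z + Im (h$k) / (cmod (h$k))^2"
    and QVE_Re: "Gamma_apply rho S (\<lambda>l. Re (h$l) - 1) k = Re z - Re (h$k) / (cmod (h$k))^2"
proof -
  define T where "T = (\<Sum>l\<in>UNIV. complex_of_real (Gamma_mat rho S $ k $ l) * (h $ l - 1))"
  have "1 = h$k * (z - T)" using assms unfolding QVE_def T_def by (simp add: algebra_simps)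
  then show "h$k \<noteq> 0" by auto
  with \<open>1 = h$k * (z - T)\<close> have inv: "z - T = inverse (h$k)" by (simp add: field_simps)
  have "Im T = Gamma_apply rho S (\<lambda>l. Im (h$l)) k"
    unfolding T_def Gamma_apply_def by simp
  with arg_cong[OF inv, of Im]
  show "Gamma_apply rho S (\<lambda>l. Im (h$l)) k = Im z + Im (h$k) / (cmod (h$k))^2"
    by (simp add: cmod_power2)
  have "Re T = Gamma_apply rho S (\<lambda>l. Re (h$l) - 1) k"
    unfolding T_def Gamma_apply_def by simp
  with arg_cong[OF inv, of Re]
  show "Gamma_apply rho S (\<lambda>l. Re (h$l) - 1) k = Re z - Re (h$k) / (cmod (h$k))^2"
    by (simp add: cmod_power2)
qed

lemma QVE_tendsto:
  assumes "F \<noteq> bot" and "eventually (\<lambda>z. QVE rho S z (g z)) F"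
    and "(g \<longlongrightarrow> h) F" and "((\<lambda>z. z) \<longlongrightarrow> z0) F"
  shows "QVE rho S z0 h"
  unfolding QVE_def
proof
  fix k
  let ?f = "\<lambda>z. z * g z $ k - g z $ k * (\<Sum>l\<in>UNIV. complex_of_real (Gamma_mat rho S $ k $ l) * (g z $ l - 1))"
  have "(?f \<longlongrightarrow> z0 * h $ k - h $ k * (\<Sum>l\<in>UNIV. complex_of_real (Gamma_mat rho S $ k $ l) * (h $ l - 1))) F"
    by (intro tendsto_intros assms(4) tendsto_vec_nth[OF assms(3)])
  moreover have "eventually (\<lambda>z. ?f z = 1) F"
    using assms(2) by eventually_elim (simp add: QVE_def)
  ultimately have "((\<lambda>z. 1) \<longlongrightarrow> z0 * h $ k - h $ k * (\<Sum>l\<in>UNIV. complex_of_real (Gamma_mat rho S $ k $ l) * (h $ l - 1))) F"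
    by (rule Lim_transform_eventually)
  then show "1 = z0 * h $ k - h $ k * (\<Sum>l\<in>UNIV. complex_of_real (Gamma_mat rho S $ k $ l) * (h $ l - 1))"
    using tendsto_unique[OF assms(1) tendsto_const] by blast
qed

lemma at_within_lower_half_plane_neq_bot:
  assumes "Im a \<le> 0"
  shows "at a within {z. Im z < 0} \<noteq> bot"
proof -
  have "a islimpt {z. Im z < 0}"
  proof (rule islimptI)
    fix T assume "a \<in> T" "open T"
    then obtain e where e: "e > 0" "ball a e \<subseteq> T" using open_contains_ball by blast
    define y where "y = a - \<i> * complex_of_real (e/2)"
    have "y \<in> T" using e by (auto simp: y_def dist_norm norm_mult)
    moreover have "Im y < 0" "y \<noteq> a" using e assms by (auto simp: y_def complex_eq_iff)
    ultimately show "\<exists>y\<in>{z. Im z < 0}. y \<in> T \<and> y \<noteq> a" by blast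
  qed
  then show ?thesis using trivial_limit_within by blast
qed

lemma Gamma_bilinear_commute:
  assumes "\<And>k l. S$k$l = S$l$k"
  shows "(\<Sum>k\<in>UNIV. rho$k * x k * Gamma_apply rho S y k) = (\<Sum>k\<in>UNIV. rho$k * y k * Gamma_apply rho S x k)"
proof -
  have "(\<Sum>k\<in>UNIV. rho$k * x k * Gamma_apply rho S y k)
      = (\<Sum>k\<in>UNIV. \<Sum>l\<in>UNIV. rho$k * x k * (S$k$l * rho$l * y l))"
    by (simp add: Gamma_apply_eq sum_distrib_left)
  also have "\<dots> = (\<Sum>l\<in>UNIV. \<Sum>k\<in>UNIV. rho$k * x k * (S$k$l * rho$l * y l))"
    by (rule sum.swap)
  also have "\<dots> = (\<Sum>l\<in>UNIV. rho$l * y l * Gamma_apply rho S x l)"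
    by (simp add: Gamma_apply_eq sum_distrib_left assms mult_ac)
  finally show ?thesis .
qed

lemma mult_le_weighted_squares:
  fixes x y b b' :: real
  assumes "0 < b" "0 < b'"
  shows "x * y \<le> (x^2 * b' / b + y^2 * b / b') / 2"
proof -
  have "0 \<le> (x*b' - y*b)^2 / (2*b*b')" using assms by simp
  also have "\<dots> = (x^2 * b' / b + y^2 * b / b') / 2 - x * y"
    using assms by (simp add: field_simps power2_eq_square)
  finally show ?thesis by simp
qed

text \<open>Schur test: AM-GM on each pair of terms, with the weights b l / b k.\<close>
lemma Gamma_form_le_of_supersolution:
  assumes S_sym: "\<And>k l. S$k$l = S$l$k"
    and S_nn: "\<And>k l. 0 \<le> S$k$l" and rho_nn: "\<And>k. 0 \<le> rho$k"
    and b_pos: "\<And>k. 0 < b k"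
    and super: "\<And>k. Gamma_apply rho S b k \<le> c k * b k"
  shows "Gamma_form rho S w \<le> (\<Sum>k\<in>UNIV. rho$k * c k * (w k)^2)"
proof -
  define M where "M k l = rho$k * S$k$l * rho$l" for k l
  define P where "P = (\<Sum>k\<in>UNIV. \<Sum>l\<in>UNIV. M k l * ((w k)^2 * b l / b k))"
  have "Gamma_form rho S w = (\<Sum>k\<in>UNIV. \<Sum>l\<in>UNIV. M k l * (w k * w l))"
    by (simp add: Gamma_form_def Gamma_apply_eq sum_distrib_left M_def mult_ac)
  also have "\<dots> \<le> (\<Sum>k\<in>UNIV. \<Sum>l\<in>UNIV. M k l * (((w k)^2 * b l / b k + (w l)^2 * b k / b l) / 2))"
    by (intro sum_mono mult_left_mono mult_le_weighted_squares b_pos)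
      (simp add: M_def S_nn rho_nn)
  also have "\<dots> = (P + (\<Sum>k\<in>UNIV. \<Sum>l\<in>UNIV. M k l * ((w l)^2 * b k / b l))) / 2"
    by (simp add: P_def sum.distrib add_divide_distrib sum_divide_distrib distrib_left)
  also have "(\<Sum>k\<in>UNIV. \<Sum>l\<in>UNIV. M k l * ((w l)^2 * b k / b l)) = P"
    unfolding P_def by (subst sum.swap) (simp add: M_def S_sym mult_ac)
  also have "(P + P) / 2 = (\<Sum>k\<in>UNIV. rho$k * ((w k)^2 / b k) * Gamma_apply rho S b k)"
    by (simp add: P_def Gamma_apply_eq sum_distrib_left M_def mult_ac)
  also have "\<dots> \<le> (\<Sum>k\<in>UNIV. rho$k * ((w k)^2 / b k) * (c k * b k))"
    by (intro sum_mono mult_left_mono super mult_nonneg_nonneg rho_nn divide_nonneg_pos b_pos) simp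
  also have "\<dots> = (\<Sum>k\<in>UNIV. rho$k * c k * (w k)^2)"
    using b_pos by (intro sum.cong refl) (simp add: field_simps less_imp_neq[symmetric])
  finally show ?thesis .
qed

lemma Gamma_form_le_at_solution:
  assumes S_sym: "\<And>k l. S$k$l = S$l$k"
    and S_nn: "\<And>k l. 0 \<le> S$k$l" and rho_nn: "\<And>k. 0 \<le> rho$k"
    and "Im z \<le> 0" and Im_pos: "\<And>k. 0 < Im (h$k)" and sol: "QVE rho S z h"
  shows "Gamma_form rho S w \<le> (\<Sum>k\<in>UNIV. rho$k * (1 / (cmod (h$k))^2) * (w k)^2)"
proof (rule Gamma_form_le_of_supersolution[OF S_sym S_nn rho_nn Im_pos])
  show "Gamma_apply rho S (\<lambda>l. Im (h$l)) k \<le> 1 / (cmod (h$k))^2 * Im (h$k)" for k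
    using QVE_Im[OF sol, of k] \<open>Im z \<le> 0\<close> by simp
qed

lemma Gamma_form_le_at_limit:
  assumes S_sym: "\<And>k l. S$k$l = S$l$k"
    and S_nn: "\<And>k l. 0 \<le> S$k$l" and rho_nn: "\<And>k. 0 \<le> rho$k"
    and F: "F \<noteq> bot" and lim: "(g \<longlongrightarrow> h) F" and nonzero: "\<And>k. h$k \<noteq> 0"
    and sol: "eventually (\<lambda>z. Im z \<le> 0 \<and> (\<forall>k. 0 < Im (g z $ k)) \<and> QVE rho S z (g z)) F"
  shows "Gamma_form rho S w \<le> (\<Sum>k\<in>UNIV. rho$k * (1 / (cmod (h$k))^2) * (w k)^2)"
proof (rule tendsto_le[OF F _ tendsto_const])
  show "((\<lambda>z. \<Sum>k\<in>UNIV. rho$k * (1 / (cmod (g z $ k))^2) * (w k)^2)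
          \<longlongrightarrow> (\<Sum>k\<in>UNIV. rho$k * (1 / (cmod (h$k))^2) * (w k)^2)) F"
    by (intro tendsto_intros tendsto_vec_nth[OF lim]) (simp add: nonzero)
  show "eventually (\<lambda>z. Gamma_form rho S w \<le> (\<Sum>k\<in>UNIV. rho$k * (1 / (cmod (g z $ k))^2) * (w k)^2)) F"
  proof (rule eventually_mono[OF sol])
    fix z assume "Im z \<le> 0 \<and> (\<forall>k. 0 < Im (g z $ k)) \<and> QVE rho S z (g z)"
    then show "Gamma_form rho S w \<le> (\<Sum>k\<in>UNIV. rho$k * (1 / (cmod (g z $ k))^2) * (w k)^2)"
      using Gamma_form_le_at_solution[OF S_sym S_nn rho_nn, of z "g z"] by simp
  qed
qed

lemma QVE_one_Im_eq_zero:
  assumes rho_pos: "\<And>k. 0 < rho$k" and S_sym: "\<And>k l. S$k$l = S$l$k"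
    and sol: "QVE rho S 1 h" and Im_nn: "\<And>k. 0 \<le> Im (h$k)"
  shows "Im (h$k) = 0"
proof -
  define a where "a = (\<lambda>k. Re (h$k))"
  define b where "b = (\<lambda>k. Im (h$k))"
  define n where "n k = (cmod (h$k))^2" for k
  have n_pos: "0 < n k" for k using QVE_nonzero[OF sol] by (simp add: n_def)
  have n_eq: "n k = (a k)^2 + (b k)^2" for k by (simp add: n_def a_def b_def cmod_power2)
  \<comment> \<open>t k = rho_k Im h_k |1 - h_k|^2 / |h_k|^2; the sum of the t k pairs the Re-equation with Im h
    against the Im-equation with Re h - 1, so it vanishes by symmetry of S.\<close>
  define t where "t k = rho$k * b k * ((1 - a k)^2 + (b k)^2) / n k" for k
  have "(\<Sum>k\<in>UNIV. t k)
      = (\<Sum>k\<in>UNIV. rho$k * b k * Gamma_apply rho S (\<lambda>l. a l - 1) k)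
        - (\<Sum>k\<in>UNIV. rho$k * (a k - 1) * Gamma_apply rho S b k)"
  proof -
    have "t k = rho$k * b k * (1 - a k / n k) - rho$k * (a k - 1) * (b k / n k)" for k
    proof -
      have "(1 - a k)^2 + (b k)^2 = n k - 2 * a k + 1"
        by (simp add: n_eq power2_eq_square algebra_simps)
      then have "t k = rho$k * b k * (n k - 2 * a k + 1) / n k" by (simp only: t_def)
      also have "\<dots> = rho$k * b k * (1 - a k / n k) - rho$k * (a k - 1) * (b k / n k)"
        using n_pos[of k] by (simp add: field_simps)
      finally show ?thesis .
    qed
    then show ?thesis
      using QVE_Im[OF sol] QVE_Re[OF sol] by (simp add: sum_subtractf a_def b_def n_def)
  qed
  also have "\<dots> = 0" by (simp add: Gamma_bilinear_commute[OF S_sym])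
  finally have "(\<Sum>k\<in>UNIV. t k) = 0" .
  moreover have "0 \<le> t k" for k
    using rho_pos[of k] Im_nn[of k] n_pos[of k] by (simp add: t_def b_def)
  ultimately have "t k = 0"
    using sum_nonneg_eq_0_iff[of UNIV t] by simp
  then have "b k * ((1 - a k)^2 + (b k)^2) = 0"
    using rho_pos[of k] n_pos[of k] by (simp add: t_def)
  then show ?thesis by (auto simp: b_def add_nonneg_eq_0_iff)
qed

lemma QVE_one_real_fixed_point:
  assumes sol: "QVE rho S 1 h" and real: "\<And>k. Im (h$k) = 0"
  shows "Gamma_apply rho S (\<lambda>l. 1 - Re (h$l)) k = (1 - Re (h$k)) / Re (h$k)"
proof -
  have "Re (h$k) \<noteq> 0" using QVE_nonzero[OF sol, of k] real[of k] by (simp add: complex_eq_iff)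
  moreover have "(cmod (h$k))^2 = (Re (h$k))^2" using real[of k] by (simp add: cmod_power2)
  ultimately have "Gamma_apply rho S (\<lambda>l. Re (h$l) - 1) k = 1 - 1 / Re (h$k)"
    using QVE_Re[OF sol, of k] by (simp add: power2_eq_square)
  moreover have "Gamma_apply rho S (\<lambda>l. 1 - Re (h$l)) k = - Gamma_apply rho S (\<lambda>l. Re (h$l) - 1) k"
    by (simp add: Gamma_apply_def sum_negf[symmetric] algebra_simps)
  ultimately show ?thesis using \<open>Re (h$k) \<noteq> 0\<close> by (simp add: field_simps)
qed

lemma Gamma_apply_mono:
  assumes "\<And>k l. 0 \<le> S$k$l" and "\<And>k. 0 \<le> rho$k" and "\<And>l. x l \<le> y l"
  shows "Gamma_apply rho S x k \<le> Gamma_apply rho S y k"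
  unfolding Gamma_apply_eq by (intro sum_mono mult_left_mono) (simp_all add: assms)

lemma Gamma_apply_pos:
  assumes "\<And>k l. 0 < S$k$l" and "\<And>k. 0 < rho$k"
    and "\<And>l. 0 \<le> x l" and "0 < x j"
  shows "0 < Gamma_apply rho S x k"
proof -
  have "0 < S$k$j * rho$j * x j" using assms by simp
  also have "\<dots> \<le> Gamma_apply rho S x k"
    unfolding Gamma_apply_eq
    by (rule member_le_sum) (use assms in \<open>auto intro!: mult_nonneg_nonneg simp: less_imp_le\<close>)
  finally show ?thesis .
qed

lemma stable_fixed_point_le_one:
  fixes r :: "'k::finite \<Rightarrow> real"
  assumes rho_pos: "\<And>k. 0 < rho$k" and S_nn: "\<And>k l. 0 \<le> S$k$l"
    and fixed: "\<And>k. Gamma_apply rho S (\<lambda>l. 1 - r l) k = (1 - r k) / r k"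
    and stable: "\<And>w. Gamma_form rho S w \<le> (\<Sum>k\<in>UNIV. rho$k * (1 / (r k)^2) * (w k)^2)"
  shows "r k \<le> 1"
proof (rule ccontr)
  assume "\<not> r k \<le> 1"
  define q where "q = (\<lambda>l. 1 - r l)"
  define w where "w = (\<lambda>l. min (q l) 0)"
  have rho_nn: "0 \<le> rho$j" for j using rho_pos[of j] by simp
  have form_lower: "rho$j * ((w j)^2 / r j) \<le> rho$j * w j * Gamma_apply rho S w j" for j
  proof -
    have "(w j)^2 / r j = w j * Gamma_apply rho S q j"
      using fixed[of j] by (cases "q j \<le> 0") (auto simp: w_def q_def power2_eq_square min_def)
    also have "\<dots> \<le> w j * Gamma_apply rho S w j"
      by (rule mult_left_mono_neg[OF Gamma_apply_mono[OF S_nn rho_nn]]) (auto simp: w_def)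
    finally have "(w j)^2 / r j \<le> w j * Gamma_apply rho S w j" .
    from mult_left_mono[OF this rho_nn] show ?thesis by (simp only: mult.assoc)
  qed
  have weight_le: "rho$j * (1 / (r j)^2) * (w j)^2 \<le> rho$j * ((w j)^2 / r j)" for j
  proof (cases "q j < 0")
    case True
    then have "1 / (r j)^2 \<le> 1 / r j" by (simp add: q_def divide_simps power2_eq_square)
    then have "1 / (r j)^2 * (w j)^2 \<le> 1 / r j * (w j)^2" by (rule mult_right_mono) simp
    from mult_left_mono[OF this rho_nn] show ?thesis by (simp add: mult.assoc)
  qed (simp add: w_def)
  have weight_less: "rho$k * (1 / (r k)^2) * (w k)^2 < rho$k * ((w k)^2 / r k)"
  proof -
    have "1 < r k" "w k = q k" "q k < 0" using \<open>\<not> r k \<le> 1\<close> by (auto simp: w_def q_def)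
    then have "1 / (r k)^2 * (w k)^2 < 1 / r k * (w k)^2"
      by (intro mult_strict_right_mono) (simp_all add: divide_simps power2_eq_square mult_neg_neg)
    from mult_strict_left_mono[OF this rho_pos[of k]] show ?thesis by (simp add: mult.assoc)
  qed
  have "(\<Sum>j\<in>UNIV. rho$j * (1 / (r j)^2) * (w j)^2) < (\<Sum>j\<in>UNIV. rho$j * ((w j)^2 / r j))"
    by (rule sum_strict_mono_ex1) (use weight_le weight_less in auto)
  also have "\<dots> \<le> Gamma_form rho S w"
    unfolding Gamma_form_def by (rule sum_mono) (rule form_lower)
  also have "\<dots> \<le> (\<Sum>j\<in>UNIV. rho$j * (1 / (r j)^2) * (w j)^2)" by (rule stable)
  finally show False by simp
qed

lemma transpose_Omega_mat:
  assumes "\<And>k l. S$k$l = S$l$k"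
  shows "transpose (Omega_mat rho S) = Omega_mat rho S"
  by (simp add: vec_eq_iff transpose_def Omega_mat_def assms mult_ac)

lemma Gamma_form_Omega_eigenvector:
  assumes rho_pos: "\<And>k. 0 < rho$k" and eig: "Omega_mat rho S *v v = l *\<^sub>R v"
  shows "Gamma_form rho S (\<lambda>k. v$k / sqrt (rho$k)) = l * (\<Sum>k\<in>UNIV. (v$k)^2)"
proof -
  have cancel: "rho$k * (x / sqrt (rho$k)) = sqrt (rho$k) * x" for k x
    using rho_pos[of k] by (simp add: field_simps real_div_sqrt)
  have "rho$k * (v$k / sqrt (rho$k)) * Gamma_apply rho S (\<lambda>k. v$k / sqrt (rho$k)) k
      = v$k * (Omega_mat rho S *v v) $ k" for k
  proof -
    have Gamma_eq: "Gamma_apply rho S (\<lambda>k. v$k / sqrt (rho$k)) k = (\<Sum>l\<in>UNIV. S$k$l * (sqrt (rho$l) * v$l))"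
      unfolding Gamma_apply_eq by (intro sum.cong refl) (simp only: mult.assoc cancel)
    show ?thesis
      by (simp only: cancel Gamma_eq) (simp add: Omega_mat_def matrix_vector_mult_def sum_distrib_left mult_ac)
  qed
  then have "Gamma_form rho S (\<lambda>k. v$k / sqrt (rho$k)) = (\<Sum>k\<in>UNIV. v$k * (Omega_mat rho S *v v) $ k)"
    by (simp add: Gamma_form_def)
  also have "\<dots> = l * (\<Sum>k\<in>UNIV. (v$k)^2)"
    using eig by (simp add: sum_distrib_left power2_eq_square mult_ac)
  finally show ?thesis .
qed

lemma stable_not_all_one:
  fixes r :: "'k::finite \<Rightarrow> real"
  assumes rho_pos: "\<And>k. 0 < rho$k" and S_sym: "\<And>k l. S$k$l = S$l$k"
    and S_pos: "\<And>k l. 0 < S$k$l"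
    and stable: "\<And>w. Gamma_form rho S w \<le> (\<Sum>k\<in>UNIV. rho$k * (1 / (r k)^2) * (w k)^2)"
    and lam: "lambda_max (Omega_mat rho S) > 1"
  shows "\<exists>k. r k \<noteq> 1"
proof (rule ccontr)
  assume "\<nexists>k. r k \<noteq> 1"
  then have r1: "r k = 1" for k by blast
  have "\<exists>v. v \<noteq> 0 \<and> Omega_mat rho S *v v = lambda_max (Omega_mat rho S) *\<^sub>R v"
    by (rule lambda_max_eigenvector[OF transpose_Omega_mat[OF S_sym]])
      (simp add: Omega_mat_def S_pos rho_pos)
  then obtain v where v: "v \<noteq> 0" "Omega_mat rho S *v v = lambda_max (Omega_mat rho S) *\<^sub>R v"
    by blast
  have "0 < (\<Sum>k\<in>UNIV. (v$k)^2)"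
    using v(1) inner_gt_zero_iff[of v] by (simp add: inner_vec_def power2_eq_square)
  moreover have "rho$k * (1 / (r k)^2) * (v$k / sqrt (rho$k))^2 = (v$k)^2" for k
    using rho_pos[of k] by (simp add: r1 power_divide)
  then have "lambda_max (Omega_mat rho S) * (\<Sum>k\<in>UNIV. (v$k)^2) \<le> (\<Sum>k\<in>UNIV. (v$k)^2)"
    using stable[of "\<lambda>k. v$k / sqrt (rho$k)"] Gamma_form_Omega_eigenvector[OF rho_pos v(2)] by simp
  ultimately show False using lam by (simp add: mult_le_cancel_right1)
qed

lemma stable_fixed_point_in_unit_interval:
  fixes r :: "'k::finite \<Rightarrow> real"
  assumes rho_pos: "\<And>k. 0 < rho$k" and S_sym: "\<And>k l. S$k$l = S$l$k"
    and S_pos: "\<And>k l. 0 < S$k$l"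
    and fixed: "\<And>k. Gamma_apply rho S (\<lambda>l. 1 - r l) k = (1 - r k) / r k"
    and stable: "\<And>w. Gamma_form rho S w \<le> (\<Sum>k\<in>UNIV. rho$k * (1 / (r k)^2) * (w k)^2)"
    and lam: "lambda_max (Omega_mat rho S) > 1"
  shows "0 < r k \<and> r k < 1"
proof -
  have le1: "r l \<le> 1" for l
    using stable_fixed_point_le_one[OF rho_pos _ fixed stable] S_pos less_imp_le by blast
  obtain j where "r j \<noteq> 1" using stable_not_all_one[OF rho_pos S_sym S_pos stable lam] by blast
  then have "0 < 1 - r j" using le1[of j] by simp
  then have "0 < (1 - r k) / r k"
    using Gamma_apply_pos[OF S_pos rho_pos, of "\<lambda>l. 1 - r l" j k] le1 fixed[of k] by simp
  then show ?thesis using le1[of k] by (auto simp: zero_less_divide_iff)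
qed

theorem mainTheorem10:
  fixes rho :: "real^'k::finite" and S :: "real^'k^'k"
    and g :: "complex \<Rightarrow> complex^'k" and g1 :: "complex^'k"
  assumes rho_pos: "\<And>k. 0 < rho $ k" and rho_lt1: "\<And>k. rho $ k < 1"
    and rho_sum: "(\<Sum>k\<in>UNIV. rho $ k) = 1"
    and S_sym: "\<And>k l. S $ k $ l = S $ l $ k"
    and S_pos: "\<And>k l. 0 < S $ k $ l"
    and g_sol: "\<And>z. Im z < 0 \<Longrightarrow> (\<forall>k. 0 < Im (g z $ k)) \<and> QVE rho S z (g z)"
    and g_uniq: "\<And>z h. Im z < 0 \<Longrightarrow> (\<forall>k. 0 < Im (h $ k)) \<Longrightarrow> QVE rho S z h \<Longrightarrow> h = g z"
    and g1_lim: "(g \<longlongrightarrow> g1) (at 1 within {z. Im z < 0})"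
    and lam: "lambda_max (Omega_mat rho S) > 1"
  shows "\<forall>k. Im (g1 $ k) = 0 \<and> 0 < Re (g1 $ k) \<and> Re (g1 $ k) < 1"
proof -
  let ?F = "at (1::complex) within {z. Im z < 0}"
  have F: "?F \<noteq> bot" by (rule at_within_lower_half_plane_neq_bot) simp
  have sol: "eventually (\<lambda>z. Im z \<le> 0 \<and> (\<forall>k. 0 < Im (g z $ k)) \<and> QVE rho S z (g z)) ?F"
    using g_sol by (simp add: eventually_at_filter less_imp_le)
  have S_nn: "0 \<le> S$k$l" and rho_nn: "0 \<le> rho$k" for k l
    using S_pos[of k l] rho_pos[of k] by simp_all
  have g1_sol: "QVE rho S 1 g1"
    by (rule QVE_tendsto[OF F _ g1_lim tendsto_ident_at]) (rule eventually_mono[OF sol], simp)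
  have "0 \<le> Im (g1$k)" for k
    by (rule tendsto_le[OF F tendsto_Im[OF tendsto_vec_nth[OF g1_lim]] tendsto_const])
      (rule eventually_mono[OF sol], simp add: less_imp_le)
  then have real: "Im (g1$k) = 0" for k by (rule QVE_one_Im_eq_zero[OF rho_pos S_sym g1_sol])
  have stable: "Gamma_form rho S w \<le> (\<Sum>k\<in>UNIV. rho$k * (1 / (Re (g1$k))^2) * (w k)^2)" for w
    using Gamma_form_le_at_limit[OF S_sym S_nn rho_nn F g1_lim QVE_nonzero[OF g1_sol] sol] real
    by (simp add: cmod_power2)
  have "0 < Re (g1$k) \<and> Re (g1$k) < 1" for k
    by (rule stable_fixed_point_in_unit_interval[OF rho_pos S_sym S_pos
          QVE_one_real_fixed_point[OF g1_sol real] stable lam])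
  then show ?thesis using real by blast
qed

end
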